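(* Let $G$ be a torsion abelian group, $S=\bigoplus_{i\in G}S_i$ a $G$-graded ring and $R=\bigoplus_{i\in G}R_i$ a graded subring of $S$ (so $R_i=R\cap S_i$). Suppose (i) $S=R[v]$ is a polynomial ring in one variable over $R$ for some homogeneous element $v$ of $S$, and (ii) $H=\{i\in G: R_i\neq0\}$ is a subgroup of $G$. Then at least one of the following holds: (a) $S_0$ is a polynomial ring in one variable over $R_0$; (b) there exists $e\in H\setminus\{0\}$ such that, if $k>0$ denotes the order of $e$ in $H$, then for every $r\in R_e\setminus\{0\}$ the localization $(S_0)_{r^k}$ is a polynomial ring in one variable.
   Context: A ring $C$ is a polynomial ring in one variable if there is a subring $A\subseteq C$ such that $C$ is a polynomial ring in one variable over $A$ (the zero ring counts). *)

theory Defs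
  imports Main "HOL-Algebra.Polynomials"
begin

definition nsm :: "nat \<Rightarrow> 'g::ab_group_add \<Rightarrow> 'g" where
  "nsm n g = ((+) g ^^ n) 0"

definition gorder :: "'g::ab_group_add \<Rightarrow> nat" where
  "gorder e = (LEAST k. 0 < k \<and> nsm k e = 0)"

(* gr i = S_i; the ambient ring S is the whole type 'a *)
definition graded_ring :: "('g::ab_group_add \<Rightarrow> 'a::comm_ring_1 set) \<Rightarrow> bool" where
  "graded_ring gr \<longleftrightarrow>
     (\<forall>i. 0 \<in> gr i \<and> (\<forall>x\<in>gr i. \<forall>y\<in>gr i. x + y \<in> gr i \<and> - x \<in> gr i)) \<and>
     (\<forall>i j. \<forall>x\<in>gr i. \<forall>y\<in>gr j. x * y \<in> gr (i + j)) \<and>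
     (\<forall>s. \<exists>!c. finite {i. c i \<noteq> 0} \<and> (\<forall>i. c i \<in> gr i) \<and> s = (\<Sum>i\<in>{i. c i \<noteq> 0}. c i))"

definition subring_set :: "'a::comm_ring_1 set \<Rightarrow> bool" where
  "subring_set R \<longleftrightarrow> 0 \<in> R \<and> 1 \<in> R \<and>
     (\<forall>x\<in>R. \<forall>y\<in>R. x + y \<in> R \<and> - x \<in> R \<and> x * y \<in> R)"

definition graded_subring :: "('g::ab_group_add \<Rightarrow> 'a::comm_ring_1 set) \<Rightarrow> 'a set \<Rightarrow> bool" where
  "graded_subring gr R \<longleftrightarrow> subring_set R \<and>
     (\<forall>r\<in>R. \<exists>c. finite {i. c i \<noteq> 0} \<and> (\<forall>i. c i \<in> R \<inter> gr i) \<and> r = (\<Sum>i\<in>{i. c i \<noteq> 0}. c i))"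

definition sring :: "'a::comm_ring_1 set \<Rightarrow> 'a ring" where
  "sring A = \<lparr>carrier = A, mult = (*), one = 1, zero = 0, add = (+)\<rparr>"

definition poly_ring_over :: "('c, 'm) ring_scheme \<Rightarrow> 'c set \<Rightarrow> 'c \<Rightarrow> bool" where
  "poly_ring_over C A x \<longleftrightarrow> cring C \<and> subring A C \<and> x \<in> carrier C \<and>
     (\<forall>c\<in>carrier C. \<exists>p. set p \<subseteq> A \<and> c = ring.eval C p x) \<and>
     (\<forall>p. set p \<subseteq> A \<and> ring.eval C p x = \<zero>\<^bsub>C\<^esub> \<longrightarrow> (\<forall>a\<in>set p. a = \<zero>\<^bsub>C\<^esub>))"

(* C is a polynomial ring in one variable (over some subring; the zero ring counts) *)
definition is_poly_ring1 :: "('c, 'm) ring_scheme \<Rightarrow> bool" where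
  "is_poly_ring1 C \<longleftrightarrow> (\<exists>A x. poly_ring_over C A x)"

(* Localization A_f of a subring A (of the ambient ring) at f \<in> A:
   elements are classes of pairs (s,n), s \<in> A, standing for s / f^n *)
definition loc_rel :: "'a::comm_ring_1 \<Rightarrow> 'a \<times> nat \<Rightarrow> 'a \<times> nat \<Rightarrow> bool" where
  "loc_rel f p q \<longleftrightarrow> (\<exists>l. f ^ l * (fst p * f ^ snd q - fst q * f ^ snd p) = 0)"

definition loc_cls :: "'a::comm_ring_1 set \<Rightarrow> 'a \<Rightarrow> 'a \<Rightarrow> nat \<Rightarrow> ('a \<times> nat) set" where
  "loc_cls A f s n = {q. fst q \<in> A \<and> loc_rel f (s, n) q}"

definition loc_rep :: "('a \<times> nat) set \<Rightarrow> 'a \<times> nat" where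
  "loc_rep Q = (SOME p. p \<in> Q)"

definition Loc :: "'a::comm_ring_1 set \<Rightarrow> 'a \<Rightarrow> ('a \<times> nat) set ring" where
  "Loc A f = \<lparr>carrier = {loc_cls A f s n | s n. s \<in> A},
     mult = (\<lambda>Q Y. loc_cls A f (fst (loc_rep Q) * fst (loc_rep Y))
                       (snd (loc_rep Q) + snd (loc_rep Y))),
     one = loc_cls A f 1 0,
     zero = loc_cls A f 0 0,
     add = (\<lambda>Q Y. loc_cls A f (fst (loc_rep Q) * f ^ snd (loc_rep Y) + fst (loc_rep Y) * f ^ snd (loc_rep Q))
                       (snd (loc_rep Q) + snd (loc_rep Y)))\<rparr>"

end

(*
  Let d be the degree of v and m the least positive integer with m d in H; it exists because
  d is torsion. Write s in S_0 as a sum of a_j v^j with a_j in R and take degree-zero components: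
  a_j may be replaced by its component of degree -j d, which vanishes unless j d is in H, that is
  unless m divides j. Hence every element of S_0 is a sum of c_i w^i with w = v^m and c_i in R of
  degree i e, where e = -m d, and such a representation is unique because v is free over R.
  If e = 0 this says S_0 = R_0[w]. Otherwise fix r in R_e and let k be the order of e. Then
  f = r^k lies in R_0, y = r w lies in S_0, and c w^i = (c r^(i(k-1)) / f^i) y^i with
  c r^(i(k-1)) in R_0, so (S_0)_f = (R_0)_f[y]; freeness of y reduces once more to that of v,
  because f^l b r^i = 0 already forces b to vanish in the localization.
*)

theory Submission
  imports Defs
begin

section \<open>Subrings of the ambient ring and polynomial rings over them\<close>

lemma subring_setD:
  assumes "subring_set A"
  shows "0 \<in> A" "1 \<in> A" "x \<in> A \<Longrightarrow> y \<in> A \<Longrightarrow> x + y \<in> A" "x \<in> A \<Longrightarrow> - x \<in> A"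
    "x \<in> A \<Longrightarrow> y \<in> A \<Longrightarrow> x * y \<in> A"
  using assms unfolding subring_set_def by auto

lemma subring_set_power: "subring_set A \<Longrightarrow> x \<in> A \<Longrightarrow> x ^ n \<in> A"
  by (induct n) (auto intro: subring_setD)

lemma subring_set_Int: "subring_set A \<Longrightarrow> subring_set B \<Longrightarrow> subring_set (A \<inter> B)"
  unfolding subring_set_def by auto

lemma subring_set_UNIV: "subring_set UNIV"
  by (simp add: subring_set_def)

lemma sring_simps [simp]:
  "carrier (sring A) = A" "mult (sring A) = (*)" "one (sring A) = 1"
  "zero (sring A) = 0" "add (sring A) = (+)"
  by (simp_all add: sring_def)

lemma cring_sring: "subring_set A \<Longrightarrow> cring (sring A)"
proof (rule cringI)
  assume A: "subring_set A"
  show "abelian_group (sring A)"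
    by (rule abelian_groupI) (use A in \<open>auto simp: add.assoc add.commute subring_setD
        intro!: bexI[of _ "- x" for x]\<close>)
  show "comm_monoid (sring A)"
    by (rule comm_monoidI) (use A in \<open>auto simp: mult.assoc mult.commute subring_setD\<close>)
qed (simp add: distrib_right)

lemma sring_pow: "x [^]\<^bsub>sring A\<^esub> (n::nat) = x ^ n"
  by (induct n) (simp_all add: mult.commute)

lemma subring_sring:
  assumes A: "subring_set A" and B: "subring_set B" "B \<subseteq> A"
  shows "subring B (sring A)"
proof -
  interpret cring "sring A" by (rule cring_sring[OF A])
  have "\<ominus>\<^bsub>sring A\<^esub> x = - x" if "x \<in> A" for x
    by (rule add.inv_equality) (use A that in \<open>auto simp: subring_setD\<close>)
  with B show ?thesis
    by (intro subringI) (auto simp: subring_setD)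
qed

text \<open>Coefficient lists are read leading coefficient first, as by \<^const>\<open>ring.eval\<close>.\<close>

fun eval_list :: "'a::comm_ring_1 list \<Rightarrow> 'a \<Rightarrow> 'a" where
  "eval_list [] x = 0"
| "eval_list (a # p) x = a * x ^ length p + eval_list p x"

lemma subring_set_eval_list:
  "subring_set A \<Longrightarrow> set p \<subseteq> A \<Longrightarrow> x \<in> A \<Longrightarrow> eval_list p x \<in> A"
  by (induct p) (auto simp: subring_setD subring_set_power)

lemma eval_list_eq_sum: "eval_list p x = (\<Sum>i<length p. rev p ! i * x ^ i)"
proof (induct p)
  case (Cons a p)
  have "(\<Sum>i<length (a # p). rev (a # p) ! i * x ^ i)
      = (\<Sum>i<length p. rev p ! i * x ^ i) + a * x ^ length p"
    by (simp add: nth_append)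
  then show ?case using Cons by simp
qed simp

lemma eval_list_upt: "eval_list (rev (map a [0..<N])) x = (\<Sum>i<N. a i * x ^ i)"
  unfolding eval_list_eq_sum by (intro sum.cong) (auto simp: rev_map)

lemma eval_sring: "subring_set A \<Longrightarrow> ring.eval (sring A) p x = eval_list p x"
proof -
  assume "subring_set A"
  then interpret cring "sring A" by (rule cring_sring)
  show ?thesis by (induct p) (simp_all add: sring_pow)
qed

lemma in_set_conv_rev_nth: "a \<in> set p \<longleftrightarrow> (\<exists>i<length p. rev p ! i = a)"
  using in_set_conv_nth[of a "rev p"] by simp

lemma rev_nth_mem: "i < length p \<Longrightarrow> rev p ! i \<in> set p"
  by (simp add: rev_nth)

lemma eval_list_span_iff_sum_span:
  assumes "0 \<in> B"
  shows "(\<exists>p. set p \<subseteq> B \<and> c = eval_list p w) \<longleftrightarrow>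
         (\<exists>N b. (\<forall>i. b i \<in> B) \<and> c = (\<Sum>i<N. b i * w ^ i))"
proof
  assume "\<exists>p. set p \<subseteq> B \<and> c = eval_list p w"
  then obtain p where p: "set p \<subseteq> B" "c = eval_list p w" by blast
  let ?b = "\<lambda>i. if i < length p then rev p ! i else 0"
  have "c = (\<Sum>i<length p. ?b i * w ^ i)" using p(2) by (simp add: eval_list_eq_sum)
  moreover have "\<forall>i. ?b i \<in> B" using p(1) rev_nth_mem assms by auto
  ultimately show "\<exists>N b. (\<forall>i. b i \<in> B) \<and> c = (\<Sum>i<N. b i * w ^ i)"
    by (intro exI[of _ "length p"] exI[of _ ?b]) simp
next
  assume "\<exists>N b. (\<forall>i. b i \<in> B) \<and> c = (\<Sum>i<N. b i * w ^ i)"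
  then obtain N b where "\<forall>i. b i \<in> B" "c = (\<Sum>i<N. b i * w ^ i)" by blast
  then show "\<exists>p. set p \<subseteq> B \<and> c = eval_list p w"
    by (intro exI[of _ "rev (map b [0..<N])"]) (auto simp: eval_list_upt)
qed

lemma eval_list_independent_iff_sum_independent:
  "(\<forall>p. set p \<subseteq> B \<and> eval_list p w = 0 \<longrightarrow> (\<forall>a\<in>set p. a = 0)) \<longleftrightarrow>
   (\<forall>N b. (\<forall>i<N. b i \<in> B) \<longrightarrow> (\<Sum>i<N. b i * w ^ i) = 0 \<longrightarrow> (\<forall>i<N. b i = 0))"
proof (intro iffI allI impI ballI)
  fix N b i
  assume L: "\<forall>p. set p \<subseteq> B \<and> eval_list p w = 0 \<longrightarrow> (\<forall>a\<in>set p. a = 0)"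
    and "\<forall>i<N. b i \<in> B" "(\<Sum>i<N. b i * w ^ i) = 0" "i < N"
  moreover have "set (rev (map b [0..<N])) \<subseteq> B" using \<open>\<forall>i<N. b i \<in> B\<close> by auto
  ultimately show "b i = 0"
    using L[rule_format, of "rev (map b [0..<N])" "b i"] by (simp add: eval_list_upt)
next
  fix p a
  assume indep: "\<forall>N b. (\<forall>i<N. b i \<in> B) \<longrightarrow> (\<Sum>i<N. b i * w ^ i) = 0 \<longrightarrow> (\<forall>i<N. b i = 0)"
    and p: "set p \<subseteq> B \<and> eval_list p w = 0" and a: "a \<in> set p"
  from a obtain i where i: "i < length p" "rev p ! i = a"
    unfolding in_set_conv_rev_nth by blast
  have "\<forall>i<length p. rev p ! i \<in> B" using p rev_nth_mem by auto
  moreover have "(\<Sum>i<length p. rev p ! i * w ^ i) = 0" using p by (simp add: eval_list_eq_sum)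
  ultimately have "\<forall>i<length p. rev p ! i = 0"
    using indep[THEN spec[of _ "length p"], THEN spec[of _ "\<lambda>i. rev p ! i"]] by blast
  with i show "a = 0" by blast
qed

lemma poly_ring_over_sring_iff:
  assumes A: "subring_set A" and B: "subring_set B" "B \<subseteq> A" and w: "w \<in> A"
  shows "poly_ring_over (sring A) B w \<longleftrightarrow>
    (\<forall>c\<in>A. \<exists>N b. (\<forall>i. b i \<in> B) \<and> c = (\<Sum>i<N. b i * w ^ i)) \<and>
    (\<forall>N b. (\<forall>i<N. b i \<in> B) \<longrightarrow> (\<Sum>i<N. b i * w ^ i) = 0 \<longrightarrow> (\<forall>i<N. b i = 0))"
  unfolding poly_ring_over_def eval_sring[OF A] sring_simps eval_list_independent_iff_sum_independent
    eval_list_span_iff_sum_span[OF subring_setD(1)[OF B(1)]]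
  using cring_sring[OF A] subring_sring[OF A B] w by simp

lemma nsm_0 [simp]: "nsm 0 g = 0"
  by (simp add: nsm_def)

lemma nsm_Suc [simp]: "nsm (Suc n) g = g + nsm n g"
  by (simp add: nsm_def)

lemma nsm_zero [simp]: "nsm n (0::'g::ab_group_add) = 0"
  by (induct n) simp_all

lemma nsm_add: "nsm (a + b) g = nsm a g + nsm b g"
  by (induct a) (simp_all add: add.assoc)

lemma nsm_mult: "nsm (a * b) g = nsm a (nsm b g)"
  by (induct a) (simp_all add: nsm_add)

lemma nsm_minus: "nsm n (- g) = - nsm n g"
  by (induct n) (simp_all add: add.commute)

lemma gorder:
  assumes "\<exists>n>0. nsm n e = 0"
  shows "0 < gorder e" "nsm (gorder e) e = 0"
  using LeastI_ex[OF assms] unfolding gorder_def by auto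

lemma sum_lessThan_mult_reindex:
  assumes m: "0 < (m::nat)" and g: "\<And>j. \<not> m dvd j \<Longrightarrow> g j = 0"
  shows "(\<Sum>j<m * L. g j) = (\<Sum>i<L. g (m * i))"
proof -
  have "(\<lambda>i. m * i) ` {..<L} \<subseteq> {..<m * L}" using m by auto
  moreover have "g j = 0" if j: "j \<in> {..<m * L} - (\<lambda>i. m * i) ` {..<L}" for j
  proof (rule g)
    show "\<not> m dvd j"
      using j by (auto elim!: dvdE)
  qed
  ultimately have "(\<Sum>j<m * L. g j) = (\<Sum>j\<in>(\<lambda>i. m * i) ` {..<L}. g j)"
    by (intro sum.mono_neutral_right) auto
  also have "\<dots> = (\<Sum>i<L. g (m * i))"
    by (rule sum.reindex_cong[of "\<lambda>i. m * i"]) (use m in \<open>auto simp: inj_on_def\<close>)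
  finally show ?thesis .
qed

text \<open>With \<open>f = r ^ k\<close> this is \<open>c w ^ i = (c r ^ (i (k - 1)) / f ^ i) (r w) ^ i\<close>,
  multiplied through by \<open>f ^ N\<close>.\<close>

lemma power_rescale:
  fixes r w :: "'a::comm_ring_1"
  assumes "0 < k" "i \<le> N"
  shows "r ^ (i * (k - 1)) * (r ^ k) ^ (N - i) * (r * w) ^ i = (r ^ k) ^ N * w ^ i"
proof -
  have "i * (k - 1) + i = k * i" using assms(1) by (cases k) auto
  moreover have "k * i \<le> k * N" using assms(2) by simp
  moreover have "k * (N - i) = k * N - k * i" by (rule diff_mult_distrib2)
  ultimately have exponent: "i * (k - 1) + k * (N - i) + i = k * N"
    by linarith
  have "r ^ (i * (k - 1)) * (r ^ k) ^ (N - i) * (r * w) ^ i = r ^ (i * (k - 1) + k * (N - i) + i) * w ^ i"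
    by (simp add: power_add power_mult power_mult_distrib ac_simps)
  also have "\<dots> = (r ^ k) ^ N * w ^ i"
    unfolding exponent by (simp add: power_mult)
  finally show ?thesis .
qed

lemma power_power_split:
  fixes r :: "'a::comm_ring_1"
  assumes "0 < k"
  shows "(r ^ k) ^ i = r ^ i * r ^ (i * (k - 1))"
proof -
  have "k * i = i + i * (k - 1)" using assms by (cases k) auto
  then have "(r ^ k) ^ i = r ^ (i + i * (k - 1))" by (metis power_mult)
  then show ?thesis by (simp add: power_add)
qed

section \<open>Localization at one element\<close>

lemma loc_rel_refl: "loc_rel f p p"
  unfolding loc_rel_def by (rule exI[of _ 0]) simp

lemma loc_rel_sym: "loc_rel f p q \<Longrightarrow> loc_rel f q p"
  unfolding loc_rel_def by (metis minus_diff_eq mult_minus_right neg_equal_0_iff_equal)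

lemma loc_rel_trans:
  assumes "loc_rel f (s, n) (t, p)" "loc_rel f (t, p) (u, q)"
  shows "loc_rel f (s, n) (u, q)"
proof -
  obtain a b where a: "f^a * (s * f^p - t * f^n) = 0" and b: "f^b * (t * f^q - u * f^p) = 0"
    using assms unfolding loc_rel_def by auto
  have "f^(a+b+p) * (s * f^q - u * f^n)
      = f^b * f^q * (f^a * (s * f^p - t * f^n)) + f^a * f^n * (f^b * (t * f^q - u * f^p))"
    by (simp add: power_add algebra_simps)
  with a b show ?thesis unfolding loc_rel_def by auto
qed

lemma loc_rel_add:
  assumes "loc_rel f (s, n) (s', n')" "loc_rel f (t, p) (t', p')"
  shows "loc_rel f (s * f^p + t * f^n, n + p) (s' * f^p' + t' * f^n', n' + p')"
proof -
  obtain a b where a: "f^a * (s * f^n' - s' * f^n) = 0" and b: "f^b * (t * f^p' - t' * f^p) = 0"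
    using assms unfolding loc_rel_def by auto
  have "f^(a+b) * ((s * f^p + t * f^n) * f^(n'+p') - (s' * f^p' + t' * f^n') * f^(n+p))
      = f^b * f^p * f^p' * (f^a * (s * f^n' - s' * f^n))
        + f^a * f^n * f^n' * (f^b * (t * f^p' - t' * f^p))"
    by (simp add: power_add algebra_simps)
  with a b show ?thesis unfolding loc_rel_def by auto
qed

lemma loc_rel_mult:
  assumes "loc_rel f (s, n) (s', n')" "loc_rel f (t, p) (t', p')"
  shows "loc_rel f (s * t, n + p) (s' * t', n' + p')"
proof -
  obtain a b where a: "f^a * (s * f^n' - s' * f^n) = 0" and b: "f^b * (t * f^p' - t' * f^p) = 0"
    using assms unfolding loc_rel_def by auto
  have "f^(a+b) * ((s * t) * f^(n'+p') - (s' * t') * f^(n+p))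
      = f^b * t * f^p' * (f^a * (s * f^n' - s' * f^n))
        + f^a * s' * f^n * (f^b * (t * f^p' - t' * f^p))"
    by (simp add: power_add algebra_simps)
  with a b show ?thesis unfolding loc_rel_def by auto
qed

locale localization =
  fixes A :: "'a::comm_ring_1 set" and f :: 'a
  assumes subring: "subring_set A" and f_in: "f \<in> A"
begin

abbreviation cls :: "'a \<Rightarrow> nat \<Rightarrow> ('a \<times> nat) set" where
  "cls \<equiv> loc_cls A f"

lemmas closed = subring_setD[OF subring] subring_set_power[OF subring] f_in

lemma cls_self: "s \<in> A \<Longrightarrow> (s, n) \<in> cls s n"
  unfolding loc_cls_def by (simp add: loc_rel_refl)

lemma cls_eq_iff:
  assumes "s \<in> A" "t \<in> A"
  shows "cls s n = cls t p \<longleftrightarrow> loc_rel f (s, n) (t, p)"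
proof
  assume "cls s n = cls t p"
  then have "(t, p) \<in> cls s n" using cls_self[OF assms(2)] by simp
  then show "loc_rel f (s, n) (t, p)" unfolding loc_cls_def by simp
next
  assume st: "loc_rel f (s, n) (t, p)"
  show "cls s n = cls t p"
    unfolding loc_cls_def using loc_rel_trans[OF st] loc_rel_trans[OF loc_rel_sym[OF st]]
    by auto
qed

lemma cls_eqI: "s \<in> A \<Longrightarrow> t \<in> A \<Longrightarrow> s * f^p = t * f^n \<Longrightarrow> cls s n = cls t p"
  unfolding cls_eq_iff loc_rel_def by (intro exI[of _ 0]) simp

lemma cls_expand: "s \<in> A \<Longrightarrow> cls s n = cls (s * f^k) (n + k)"
  by (rule cls_eqI) (simp_all add: closed power_add algebra_simps)

lemma loc_rep:
  assumes "s \<in> A"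
  shows "fst (loc_rep (cls s n)) \<in> A" "loc_rel f (loc_rep (cls s n)) (s, n)"
proof -
  have "loc_rep (cls s n) \<in> cls s n"
    unfolding loc_rep_def using cls_self[OF assms] by (rule someI)
  then show "fst (loc_rep (cls s n)) \<in> A" "loc_rel f (loc_rep (cls s n)) (s, n)"
    unfolding loc_cls_def by (auto intro: loc_rel_sym)
qed

text \<open>The operations of \<^const>\<open>Loc\<close> compute with arbitrarily chosen representatives;
  the next two lemmas show that the result does not depend on the choice.\<close>

lemma add_cls:
  assumes "s \<in> A" "t \<in> A"
  shows "cls s n \<oplus>\<^bsub>Loc A f\<^esub> cls t p = cls (s * f^p + t * f^n) (n + p)"
proof -
  obtain s' n' t' p' where s': "loc_rep (cls s n) = (s', n')" and t': "loc_rep (cls t p) = (t', p')"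
    by fastforce
  have "s' \<in> A" "t' \<in> A" "loc_rel f (s', n') (s, n)" "loc_rel f (t', p') (t, p)"
    using loc_rep[OF assms(1), of n] loc_rep[OF assms(2), of p] s' t' by simp_all
  then show ?thesis
    unfolding Loc_def using s' t' assms
    by (simp add: cls_eq_iff closed loc_rel_add)
qed

lemma mult_cls:
  assumes "s \<in> A" "t \<in> A"
  shows "cls s n \<otimes>\<^bsub>Loc A f\<^esub> cls t p = cls (s * t) (n + p)"
proof -
  obtain s' n' t' p' where s': "loc_rep (cls s n) = (s', n')" and t': "loc_rep (cls t p) = (t', p')"
    by fastforce
  have "s' \<in> A" "t' \<in> A" "loc_rel f (s', n') (s, n)" "loc_rel f (t', p') (t, p)"
    using loc_rep[OF assms(1), of n] loc_rep[OF assms(2), of p] s' t' by simp_all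
  then show ?thesis
    unfolding Loc_def using s' t' assms
    by (simp add: cls_eq_iff closed loc_rel_mult)
qed

lemma Loc_one: "\<one>\<^bsub>Loc A f\<^esub> = cls 1 0"
  and Loc_zero: "\<zero>\<^bsub>Loc A f\<^esub> = cls 0 0"
  by (simp_all add: Loc_def)

lemma cls_in_carrier: "s \<in> A \<Longrightarrow> cls s n \<in> carrier (Loc A f)"
  by (auto simp: Loc_def)

lemma Loc_carrierE:
  assumes "Q \<in> carrier (Loc A f)"
  obtains s n where "s \<in> A" "Q = cls s n"
  using assms by (auto simp: Loc_def)

lemma cring_Loc: "cring (Loc A f)"
proof (rule cringI)
  show "comm_monoid (Loc A f)"
    by (rule comm_monoidI; (elim Loc_carrierE; hypsubst)?)
      (simp_all add: Loc_one mult_cls closed cls_in_carrier ac_simps)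
  show "abelian_group (Loc A f)"
  proof (rule abelian_groupI)
    fix x y z assume "x \<in> carrier (Loc A f)" "y \<in> carrier (Loc A f)" "z \<in> carrier (Loc A f)"
    then show "x \<oplus>\<^bsub>Loc A f\<^esub> y \<oplus>\<^bsub>Loc A f\<^esub> z = x \<oplus>\<^bsub>Loc A f\<^esub> (y \<oplus>\<^bsub>Loc A f\<^esub> z)"
      by (elim Loc_carrierE) (simp add: add_cls closed,
          rule cls_eqI, simp_all add: closed algebra_simps power_add)
  next
    fix x assume "x \<in> carrier (Loc A f)"
    then obtain s n where s: "s \<in> A" "x = cls s n" by (rule Loc_carrierE)
    then have "cls (- s) n \<oplus>\<^bsub>Loc A f\<^esub> x = \<zero>\<^bsub>Loc A f\<^esub>"
      by (simp add: Loc_zero add_cls closed) (rule cls_eqI, simp_all add: closed)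
    then show "\<exists>y\<in>carrier (Loc A f). y \<oplus>\<^bsub>Loc A f\<^esub> x = \<zero>\<^bsub>Loc A f\<^esub>"
      using s by (auto intro: cls_in_carrier closed)
  qed (auto elim!: Loc_carrierE simp: Loc_zero add_cls closed cls_in_carrier ac_simps)
next
  fix x y z assume "x \<in> carrier (Loc A f)" "y \<in> carrier (Loc A f)" "z \<in> carrier (Loc A f)"
  then show "(x \<oplus>\<^bsub>Loc A f\<^esub> y) \<otimes>\<^bsub>Loc A f\<^esub> z = x \<otimes>\<^bsub>Loc A f\<^esub> z \<oplus>\<^bsub>Loc A f\<^esub> y \<otimes>\<^bsub>Loc A f\<^esub> z"
    by (elim Loc_carrierE) (simp add: add_cls mult_cls closed,
        rule cls_eqI, simp_all add: closed algebra_simps power_add)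
qed

lemma minus_cls: "s \<in> A \<Longrightarrow> \<ominus>\<^bsub>Loc A f\<^esub> cls s n = cls (- s) n"
proof -
  assume s: "s \<in> A"
  interpret cring "Loc A f" by (rule cring_Loc)
  have "cls (- s) n \<oplus>\<^bsub>Loc A f\<^esub> cls s n = \<zero>\<^bsub>Loc A f\<^esub>"
    using s by (simp add: Loc_zero add_cls closed) (rule cls_eqI, simp_all add: closed)
  then show ?thesis
    by (rule add.inv_equality) (simp_all add: s closed cls_in_carrier)
qed

lemma pow_cls: "s \<in> A \<Longrightarrow> cls s 0 [^]\<^bsub>Loc A f\<^esub> (k::nat) = cls (s ^ k) 0"
  by (induct k) (simp_all add: Loc_one mult_cls closed mult.commute)

lemma zero_cls_iff: "s \<in> A \<Longrightarrow> cls s n = \<zero>\<^bsub>Loc A f\<^esub> \<longleftrightarrow> (\<exists>l. f^l * s = 0)"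
  by (simp add: Loc_zero cls_eq_iff closed loc_rel_def)

lemma eval_Loc_cls:
  assumes "set bs \<subseteq> A" "y \<in> A"
  shows "ring.eval (Loc A f) (map (\<lambda>b. cls b M) bs) (cls y 0) = cls (eval_list bs y) M"
  using assms(1)
proof (induct bs)
  interpret cring "Loc A f" by (rule cring_Loc)
  case Nil
  show ?case by (simp add: Loc_zero) (rule cls_eqI, simp_all add: closed)
next
  interpret cring "Loc A f" by (rule cring_Loc)
  case (Cons b bs)
  then have "eval_list bs y \<in> A" "b \<in> A"
    using subring_set_eval_list[OF subring _ assms(2)] by auto
  with Cons assms(2) show ?case
    by (simp add: pow_cls mult_cls add_cls closed) (rule cls_eqI, simp_all add: closed algebra_simps power_add)
qed

context
  fixes B :: "'a set"
  assumes B: "subring_set B" "B \<subseteq> A" "f \<in> B"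
begin

lemma subring_Loc: "subring {cls b n | b n. b \<in> B} (Loc A f)"
proof -
  interpret cring "Loc A f" by (rule cring_Loc)
  have A: "b \<in> B \<Longrightarrow> b \<in> A" for b using B(2) by auto
  note closedB = subring_setD[OF B(1)] subring_set_power[OF B(1)] B(3)
  show ?thesis
  proof (rule subringI)
    show "\<one>\<^bsub>Loc A f\<^esub> \<in> {cls b n | b n. b \<in> B}"
      using closedB by (auto simp: Loc_one)
    show "{cls b n | b n. b \<in> B} \<subseteq> carrier (Loc A f)"
      by (auto simp: A cls_in_carrier)
  next
    fix h assume "h \<in> {cls b n | b n. b \<in> B}"
    then obtain b n where "b \<in> B" "h = cls b n" by blast
    then show "\<ominus>\<^bsub>Loc A f\<^esub> h \<in> {cls b n | b n. b \<in> B}"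
      by (auto simp: A minus_cls intro!: closedB)
  next
    fix h1 h2 assume "h1 \<in> {cls b n | b n. b \<in> B}" "h2 \<in> {cls b n | b n. b \<in> B}"
    then obtain b1 n1 b2 n2 where "b1 \<in> B" "h1 = cls b1 n1" "b2 \<in> B" "h2 = cls b2 n2" by blast
    then show "h1 \<otimes>\<^bsub>Loc A f\<^esub> h2 \<in> {cls b n | b n. b \<in> B}"
      and "h1 \<oplus>\<^bsub>Loc A f\<^esub> h2 \<in> {cls b n | b n. b \<in> B}"
      by (auto simp: A mult_cls add_cls intro!: closedB)
  qed
qed

lemma common_denominator:
  "set p \<subseteq> {cls b n | b n. b \<in> B} \<Longrightarrow> \<exists>M bs. set bs \<subseteq> B \<and> p = map (\<lambda>b. cls b M) bs"
proof (induct p)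
  case Nil
  show ?case by simp
next
  case (Cons c p)
  then obtain M bs where bs: "set bs \<subseteq> B" "p = map (\<lambda>b. cls b M) bs" by auto
  from Cons obtain b n where b: "b \<in> B" "c = cls b n" by auto
  let ?bs = "b * f^M # map (\<lambda>t. t * f^n) bs"
  have "set ?bs \<subseteq> B"
    using b bs closed by (auto intro!: subring_setD[OF B(1)] subring_set_power[OF B(1)] B(3))
  moreover have "c = cls (b * f^M) (n + M)"
    unfolding b(2) by (rule cls_expand) (use b(1) B(2) in auto)
  moreover have "cls t M = cls (t * f^n) (n + M)" if "t \<in> set bs" for t
    using cls_expand[of t M n] that bs(1) B(2) by (simp add: add.commute subset_iff)
  ultimately have "set ?bs \<subseteq> B \<and> c # p = map (\<lambda>b. cls b (n + M)) ?bs"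
    using bs(2) by simp
  then show ?case by (intro exI[of _ "n + M"] exI[of _ ?bs])
qed

lemma poly_ring_over_LocI:
  assumes y: "y \<in> A"
    and gen: "\<And>s. s \<in> A \<Longrightarrow> \<exists>n N b. (\<forall>i. b i \<in> B) \<and> f^n * s = (\<Sum>i<N. b i * y^i)"
    and indep: "\<And>N b. \<forall>i<N. b i \<in> B \<Longrightarrow> \<exists>l. f^l * (\<Sum>i<N. b i * y^i) = 0 \<Longrightarrow>
                  \<forall>i<N. \<exists>l. f^l * b i = 0"
  shows "poly_ring_over (Loc A f) {cls b n | b n. b \<in> B} (cls y 0)"
  unfolding poly_ring_over_def
proof (intro conjI ballI allI impI)
  show "cring (Loc A f)" by (rule cring_Loc)
  show "subring {cls b n | b n. b \<in> B} (Loc A f)" by (rule subring_Loc)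
  show "cls y 0 \<in> carrier (Loc A f)" by (rule cls_in_carrier[OF y])
next
  fix Q assume "Q \<in> carrier (Loc A f)"
  then obtain s n where s: "s \<in> A" "Q = cls s n" by (rule Loc_carrierE)
  then obtain k N b where b: "\<forall>i. b i \<in> B" "f^k * s = (\<Sum>i<N. b i * y^i)" using gen[OF s(1)] by blast
  let ?bs = "rev (map b [0..<N])"
  have "set ?bs \<subseteq> B" using b(1) by auto
  then have "ring.eval (Loc A f) (map (\<lambda>b. cls b (n + k)) ?bs) (cls y 0) = cls (f^k * s) (n + k)"
    using B(2) y by (simp add: eval_Loc_cls eval_list_upt b(2))
  also have "\<dots> = Q"
    using s cls_expand[of s n k] by (simp add: mult.commute)
  finally show "\<exists>p. set p \<subseteq> {cls b n | b n. b \<in> B} \<and> Q = ring.eval (Loc A f) p (cls y 0)"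
    using \<open>set ?bs \<subseteq> B\<close> by (intro exI[of _ "map (\<lambda>b. cls b (n + k)) ?bs"]) auto
next
  fix p a assume p: "set p \<subseteq> {cls b n | b n. b \<in> B} \<and> ring.eval (Loc A f) p (cls y 0) = \<zero>\<^bsub>Loc A f\<^esub>"
    and a: "a \<in> set p"
  obtain M bs where bs: "set bs \<subseteq> B" "p = map (\<lambda>b. cls b M) bs"
    using common_denominator[OF conjunct1[OF p]] by blast
  have bsA: "set bs \<subseteq> A" using bs(1) B(2) by auto
  have "cls (eval_list bs y) M = \<zero>\<^bsub>Loc A f\<^esub>"
    using conjunct2[OF p] unfolding bs(2) eval_Loc_cls[OF bsA y] .
  then have "\<exists>l. f^l * (\<Sum>i<length bs. rev bs ! i * y^i) = 0"
    using zero_cls_iff subring_set_eval_list[OF subring bsA y] by (simp add: eval_list_eq_sum)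
  moreover have "\<forall>i<length bs. rev bs ! i \<in> B"
    using bs(1) rev_nth_mem by auto
  ultimately have "\<forall>i<length bs. \<exists>l. f^l * rev bs ! i = 0"
    by (intro indep)
  then have "\<forall>b\<in>set bs. \<exists>l. f^l * b = 0"
    by (auto simp: in_set_conv_rev_nth)
  moreover obtain b where "b \<in> set bs" "a = cls b M"
    using a bs(2) by auto
  ultimately show "a = \<zero>\<^bsub>Loc A f\<^esub>"
    using bsA by (simp add: zero_cls_iff subset_iff)
qed

end

end

section \<open>Graded rings\<close>

definition homog_comp :: "('g::ab_group_add \<Rightarrow> 'a::comm_ring_1 set) \<Rightarrow> 'g \<Rightarrow> 'a \<Rightarrow> 'a" where
  "homog_comp gr i s =
     (THE c. finite {i. c i \<noteq> 0} \<and> (\<forall>i. c i \<in> gr i) \<and> s = (\<Sum>i\<in>{i. c i \<noteq> 0}. c i)) i"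

locale grading =
  fixes gr :: "'g::ab_group_add \<Rightarrow> 'a::comm_ring_1 set"
  assumes graded: "graded_ring gr"
begin

lemma zero_in_gr [simp]: "0 \<in> gr i"
  and add_in_gr: "x \<in> gr i \<Longrightarrow> y \<in> gr i \<Longrightarrow> x + y \<in> gr i"
  and uminus_in_gr: "x \<in> gr i \<Longrightarrow> - x \<in> gr i"
  and mult_in_gr: "x \<in> gr i \<Longrightarrow> y \<in> gr j \<Longrightarrow> x * y \<in> gr (i + j)"
  using graded unfolding graded_ring_def by auto

lemma graded_decomposition:
  "\<exists>!c. finite {i. c i \<noteq> 0} \<and> (\<forall>i. c i \<in> gr i) \<and> s = (\<Sum>i\<in>{i. c i \<noteq> 0}. c i)"
  using graded unfolding graded_ring_def by blast

lemma homog_comp_spec: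
  "finite {i. homog_comp gr i s \<noteq> 0} \<and> (\<forall>i. homog_comp gr i s \<in> gr i) \<and>
   s = (\<Sum>i\<in>{i. homog_comp gr i s \<noteq> 0}. homog_comp gr i s)"
  using theI'[OF graded_decomposition[of s]] unfolding homog_comp_def by auto

lemma finite_homog_comp_support: "finite {i. homog_comp gr i s \<noteq> 0}"
  using homog_comp_spec by blast

lemma homog_comp_in_gr: "homog_comp gr i s \<in> gr i"
  using homog_comp_spec by blast

lemma sum_homog_comp:
  assumes "finite F" "{i. homog_comp gr i s \<noteq> 0} \<subseteq> F"
  shows "(\<Sum>i\<in>F. homog_comp gr i s) = s"
proof -
  have "(\<Sum>i\<in>F. homog_comp gr i s) = (\<Sum>i\<in>{i. homog_comp gr i s \<noteq> 0}. homog_comp gr i s)"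
    by (rule sum.mono_neutral_right[OF assms]) auto
  also have "\<dots> = s"
    using homog_comp_spec by metis
  finally show ?thesis .
qed

lemma homog_comp_unique:
  assumes F: "finite F" and c: "\<And>i. c i \<in> gr i" "\<And>i. i \<notin> F \<Longrightarrow> c i = 0" and s: "s = sum c F"
  shows "homog_comp gr i s = c i"
proof -
  have sub: "{i. c i \<noteq> 0} \<subseteq> F" using c(2) by auto
  have "finite {i. c i \<noteq> 0} \<and> (\<forall>i. c i \<in> gr i) \<and> s = (\<Sum>i\<in>{i. c i \<noteq> 0}. c i)"
    using finite_subset[OF sub F] c(1) s sum.mono_neutral_right[OF F sub] by auto
  then have "(THE c. finite {i. c i \<noteq> 0} \<and> (\<forall>i. c i \<in> gr i) \<and> s = (\<Sum>i\<in>{i. c i \<noteq> 0}. c i)) = c"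
    by (rule the1_equality[OF graded_decomposition])
  then show ?thesis
    unfolding homog_comp_def by simp
qed

lemma homog_comp_homogeneous: "s \<in> gr j \<Longrightarrow> homog_comp gr i s = (if i = j then s else 0)"
  by (rule homog_comp_unique[of "{j}"]) auto

lemma homog_comp_zero [simp]: "homog_comp gr i 0 = 0"
  using homog_comp_homogeneous[OF zero_in_gr[of i]] by simp

lemma homog_comp_add: "homog_comp gr i (s + t) = homog_comp gr i s + homog_comp gr i t"
proof -
  let ?F = "{i. homog_comp gr i s \<noteq> 0} \<union> {i. homog_comp gr i t \<noteq> 0}"
  have F: "finite ?F" using finite_homog_comp_support by blast
  show ?thesis
  proof (rule homog_comp_unique[OF F])
    show "homog_comp gr i s + homog_comp gr i t \<in> gr i" for i
      by (intro add_in_gr homog_comp_in_gr)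
    show "s + t = (\<Sum>i\<in>?F. homog_comp gr i s + homog_comp gr i t)"
      using sum_homog_comp[OF F, of s] sum_homog_comp[OF F, of t] by (auto simp: sum.distrib)
  qed auto
qed

lemma homog_comp_sum: "homog_comp gr i (\<Sum>x\<in>Y. g x) = (\<Sum>x\<in>Y. homog_comp gr i (g x))"
  by (induct Y rule: infinite_finite_induct)
    (simp_all add: homog_comp_add)

lemma homog_comp_mult_homogeneous:
  assumes x: "x \<in> gr j"
  shows "homog_comp gr k (x * y) = x * homog_comp gr (k - j) y"
proof -
  let ?S = "{i. homog_comp gr i y \<noteq> 0}"
  have S: "finite ?S" by (rule finite_homog_comp_support)
  show ?thesis
  proof (rule homog_comp_unique[of "(\<lambda>i. i + j) ` ?S"])
    show "x * homog_comp gr (i - j) y \<in> gr i" for i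
      using mult_in_gr[OF x homog_comp_in_gr[of "i - j" y]] by simp
    show "i \<notin> (\<lambda>i. i + j) ` ?S \<Longrightarrow> x * homog_comp gr (i - j) y = 0" for i
      by (metis (mono_tags, lifting) diff_add_cancel image_eqI mem_Collect_eq mult_zero_right)
    have "x * y = x * (\<Sum>i\<in>?S. homog_comp gr i y)"
      using sum_homog_comp[OF S subset_refl] by simp
    also have "\<dots> = (\<Sum>i\<in>?S. x * homog_comp gr ((i + j) - j) y)"
      by (simp add: sum_distrib_left)
    also have "\<dots> = (\<Sum>i\<in>(\<lambda>i. i + j) ` ?S. x * homog_comp gr (i - j) y)"
      by (subst sum.reindex) (auto simp: inj_on_def)
    finally show "x * y = (\<Sum>i\<in>(\<lambda>i. i + j) ` ?S. x * homog_comp gr (i - j) y)" .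
  qed (use S in simp)
qed

text \<open>The degree-zero component of \<^term>\<open>1::'a\<close> acts as a unit on homogeneous elements,
  hence on everything, so it is \<^term>\<open>1::'a\<close>.\<close>

lemma one_in_gr0: "1 \<in> gr 0"
proof -
  let ?c = "homog_comp gr 0 1"
  have unit: "x * ?c = x" if "x \<in> gr i" for x i
    using homog_comp_mult_homogeneous[OF that, of i 1] homog_comp_homogeneous[OF that, of i] by simp
  let ?S = "{i. homog_comp gr i 1 \<noteq> 0}"
  have S: "finite ?S" by (rule finite_homog_comp_support)
  have "1 = (\<Sum>i\<in>?S. homog_comp gr i 1 * ?c)"
    using sum_homog_comp[OF S subset_refl] unit[OF homog_comp_in_gr] by simp
  also have "\<dots> = ?c"
    using sum_homog_comp[OF S subset_refl] by (simp add: sum_distrib_right[symmetric])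
  finally show ?thesis using homog_comp_in_gr[of 0 1] by simp
qed

lemma power_in_gr: "x \<in> gr i \<Longrightarrow> x ^ n \<in> gr (nsm n i)"
  by (induct n) (simp_all add: one_in_gr0 mult_in_gr)

lemma subring_set_gr0: "subring_set (gr 0)"
  unfolding subring_set_def using one_in_gr0 add_in_gr uminus_in_gr mult_in_gr[of _ 0 _ 0] by auto

end

section \<open>The degree-zero part of a graded polynomial extension\<close>

locale graded_poly_extension = grading gr for gr :: "'g::ab_group_add \<Rightarrow> 'a::comm_ring_1 set" +
  fixes R :: "'a set" and v :: 'a and d :: 'g and H :: "'g set"
  assumes graded_subring: "graded_subring gr R"
    and v_in_gr: "v \<in> gr d"
    and poly_ring: "poly_ring_over (sring UNIV) R v"
    and d_torsion: "\<exists>n>0. nsm n d = 0"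
    and H_eq: "H = {i. R \<inter> gr i \<noteq> {0}}"
    and H_zero: "0 \<in> H" and H_add: "i \<in> H \<Longrightarrow> j \<in> H \<Longrightarrow> i + j \<in> H"
    and H_uminus: "i \<in> H \<Longrightarrow> - i \<in> H"
begin

lemma subring_set_R: "subring_set R"
  using graded_subring unfolding graded_subring_def by blast

lemmas R_closed = subring_setD[OF subring_set_R] subring_set_power[OF subring_set_R]

lemma nsm_in_H: "i \<in> H \<Longrightarrow> nsm n i \<in> H"
  by (induct n) (simp_all add: H_zero H_add)

lemma homog_comp_in_R: "r \<in> R \<Longrightarrow> homog_comp gr i r \<in> R"
proof -
  assume "r \<in> R"
  then obtain c where c: "finite {i. c i \<noteq> 0}" "\<forall>i. c i \<in> R \<inter> gr i" "r = (\<Sum>i\<in>{i. c i \<noteq> 0}. c i)"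
    using graded_subring unfolding graded_subring_def by blast
  then have "homog_comp gr i r = c i"
    by (intro homog_comp_unique[OF c(1)]) auto
  with c(2) show ?thesis by auto
qed

lemma homog_comp_R_outside_H: "r \<in> R \<Longrightarrow> i \<notin> H \<Longrightarrow> homog_comp gr i r = 0"
  using homog_comp_in_R homog_comp_in_gr unfolding H_eq by blast

lemma v_spans: "\<exists>N a. (\<forall>i. a i \<in> R) \<and> s = (\<Sum>i<N. a i * v ^ i)"
  using poly_ring poly_ring_over_sring_iff[OF subring_set_UNIV subring_set_R] by blast

lemma v_independent: "\<forall>i<N. a i \<in> R \<Longrightarrow> (\<Sum>i<N. a i * v ^ i) = 0 \<Longrightarrow> \<forall>i<N. a i = 0"
  using poly_ring poly_ring_over_sring_iff[OF subring_set_UNIV subring_set_R] by blast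

definition stride :: nat where
  "stride = (LEAST m. 0 < m \<and> nsm m d \<in> H)"

lemma stride_pos: "0 < stride" and nsm_stride_in_H: "nsm stride d \<in> H"
proof -
  obtain n where "0 < n" "nsm n d = 0" using d_torsion by blast
  then have "0 < n \<and> nsm n d \<in> H" using H_zero by simp
  then show "0 < stride" "nsm stride d \<in> H"
    using LeastI[of "\<lambda>m. 0 < m \<and> nsm m d \<in> H"] unfolding stride_def by blast+
qed

lemma stride_dvd:
  assumes "nsm j d \<in> H"
  shows "stride dvd j"
proof (rule ccontr)
  assume "\<not> stride dvd j"
  then have pos: "0 < j mod stride" by (simp add: mod_greater_zero_iff_not_dvd)
  have "nsm j d = nsm (j div stride) (nsm stride d) + nsm (j mod stride) d"
    by (metis div_mult_mod_eq nsm_add nsm_mult)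
  then have "nsm (j mod stride) d = nsm j d + - nsm (j div stride) (nsm stride d)"
    by (simp add: algebra_simps)
  also have "\<dots> \<in> H"
    by (intro H_add H_uminus nsm_in_H assms nsm_stride_in_H)
  finally have "nsm (j mod stride) d \<in> H" .
  with pos have "stride \<le> j mod stride"
    unfolding stride_def by (intro Least_le) simp
  with mod_less_divisor[OF stride_pos, of j] show False by linarith
qed

lemma gr0_expansion:
  assumes s: "s \<in> gr 0"
  shows "\<exists>N c. (\<forall>i. c i \<in> R \<inter> gr (nsm i (- nsm stride d))) \<and> s = (\<Sum>i<N. c i * (v ^ stride) ^ i)"
proof -
  obtain N a where a: "\<forall>i. a i \<in> R" "s = (\<Sum>j<N. a j * v ^ j)" using v_spans by blast
  define b where "b j = homog_comp gr (- nsm j d) (a j)" for j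
  have b_zero: "b j = 0" if "\<not> stride dvd j" for j
    using that stride_dvd homog_comp_R_outside_H[OF a(1)[rule_format]] H_uminus
    unfolding b_def by force
  have "s = homog_comp gr 0 s" using homog_comp_homogeneous[OF s] by simp
  also have "\<dots> = (\<Sum>j<N. b j * v ^ j)"
    unfolding a(2) b_def homog_comp_sum
    using homog_comp_mult_homogeneous[OF power_in_gr[OF v_in_gr]] by (simp add: mult.commute)
  also have "\<dots> = (\<Sum>j<stride * N. if j < N then b j * v ^ j else 0)"
    using stride_pos by (intro sum.mono_neutral_cong_left) auto
  also have "\<dots> = (\<Sum>i<N. if stride * i < N then b (stride * i) * v ^ (stride * i) else 0)"
    using b_zero by (intro sum_lessThan_mult_reindex[OF stride_pos]) auto
  also have "\<dots> = (\<Sum>i<N. (if stride * i < N then b (stride * i) else 0) * (v ^ stride) ^ i)"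
    by (intro sum.cong) (simp_all add: power_mult)
  finally have "s = \<dots>" .
  moreover have "b (stride * i) \<in> R \<inter> gr (nsm i (- nsm stride d))" for i
    using homog_comp_in_R[OF a(1)[rule_format]] homog_comp_in_gr
    by (simp add: b_def nsm_minus nsm_mult mult.commute[of stride])
  ultimately show ?thesis
    by (intro exI[of _ N] exI[of _ "\<lambda>i. if stride * i < N then b (stride * i) else 0"])
      (simp add: R_closed)
qed

lemma stride_power_independent:
  assumes q: "\<forall>i<L. q i \<in> R" and z: "(\<Sum>i<L. q i * (v ^ stride) ^ i) = 0"
  shows "\<forall>i<L. q i = 0"
proof -
  define a where "a j = (if stride dvd j then q (j div stride) else 0)" for j
  have "(\<Sum>j<stride * L. a j * v ^ j) = (\<Sum>i<L. q i * (v ^ stride) ^ i)"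
    using stride_pos
    by (subst sum_lessThan_mult_reindex[OF stride_pos]) (auto simp: a_def power_mult)
  then have a_zero: "\<forall>j<stride * L. a j = 0"
    using z q stride_pos by (intro v_independent) (auto simp: a_def R_closed less_mult_imp_div_less)
  show ?thesis
  proof (intro allI impI)
    fix i assume "i < L"
    with a_zero stride_pos have "a (stride * i) = 0" by simp
    with stride_pos show "q i = 0" by (simp add: a_def)
  qed
qed

lemma gr0_poly_ring:
  assumes "nsm stride d = 0"
  shows "poly_ring_over (sring (gr 0)) (R \<inter> gr 0) (v ^ stride)"
proof -
  have "v ^ stride \<in> gr 0" using power_in_gr[OF v_in_gr, of stride] assms by simp
  moreover have "\<exists>N c. (\<forall>i. c i \<in> R \<inter> gr 0) \<and> s = (\<Sum>i<N. c i * (v ^ stride) ^ i)"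
    if "s \<in> gr 0" for s
    using gr0_expansion[OF that] assms by simp
  moreover have "\<forall>i<N. b i = 0"
    if "\<forall>i<N. b i \<in> R \<inter> gr 0" "(\<Sum>i<N. b i * (v ^ stride) ^ i) = 0" for N b
    using stride_power_independent that by blast
  ultimately show ?thesis
    using poly_ring_over_sring_iff[OF subring_set_gr0 subring_set_Int[OF subring_set_R subring_set_gr0]]
    by blast
qed

context
  fixes r :: 'a and k :: nat
  assumes r: "r \<in> R \<inter> gr (- nsm stride d)" and k: "0 < k" "nsm k (- nsm stride d) = 0"
begin

lemma power_order_in_R_gr0: "r ^ k \<in> R \<inter> gr 0"
  using r power_in_gr[of r "- nsm stride d" k] k R_closed by auto

lemma rescaled_generator_in_gr0: "r * v ^ stride \<in> gr 0"
  using mult_in_gr[OF _ power_in_gr[OF v_in_gr], of r "- nsm stride d" stride] r by simp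

lemma gr0_localized_span:
  assumes s: "s \<in> gr 0"
  shows "\<exists>n N b. (\<forall>i. b i \<in> R \<inter> gr 0) \<and> (r ^ k) ^ n * s = (\<Sum>i<N. b i * (r * v ^ stride) ^ i)"
proof -
  define e where "e = - nsm stride d"
  obtain N c where c: "\<forall>i. c i \<in> R \<inter> gr (nsm i e)" "s = (\<Sum>i<N. c i * (v ^ stride) ^ i)"
    using gr0_expansion[OF s] unfolding e_def by blast
  define b where "b i = c i * r ^ (i * (k - 1)) * (r ^ k) ^ (N - i)" for i
  have "b i \<in> R \<inter> gr 0" for i
  proof -
    have "i + i * (k - 1) = i * k" using k(1) by (cases k) auto
    then have "nsm i e + nsm (i * (k - 1)) e = nsm i (nsm k e)"
      by (metis nsm_add nsm_mult)
    then have "c i * r ^ (i * (k - 1)) \<in> gr 0"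
      using mult_in_gr[OF _ power_in_gr, of "c i" "nsm i e" r e "i * (k - 1)"] c(1) r k(2)
      unfolding e_def by auto
    then show ?thesis
      using c(1) r power_order_in_R_gr0 unfolding b_def
      by (auto intro!: R_closed mult_in_gr[where i = 0 and j = 0, simplified]
          power_in_gr[where i = 0, simplified])
  qed
  moreover have "(r ^ k) ^ N * (c i * (v ^ stride) ^ i) = b i * (r * v ^ stride) ^ i" if "i < N" for i
  proof -
    have "b i * (r * v ^ stride) ^ i
        = c i * (r ^ (i * (k - 1)) * (r ^ k) ^ (N - i) * (r * v ^ stride) ^ i)"
      unfolding b_def by (simp add: ac_simps)
    also have "\<dots> = (r ^ k) ^ N * (c i * (v ^ stride) ^ i)"
      unfolding power_rescale[OF k(1) less_imp_le[OF that]] by (simp add: ac_simps)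
    finally show ?thesis by simp
  qed
  then have "(r ^ k) ^ N * s = (\<Sum>i<N. b i * (r * v ^ stride) ^ i)"
    unfolding c(2) sum_distrib_left by (intro sum.cong) simp_all
  ultimately show ?thesis by blast
qed

lemma gr0_localized_independent:
  assumes b: "\<forall>i<N. b i \<in> R \<inter> gr 0"
    and z: "(r ^ k) ^ l * (\<Sum>i<N. b i * (r * v ^ stride) ^ i) = 0"
  shows "\<forall>i<N. \<exists>l. (r ^ k) ^ l * b i = 0"
proof -
  have "(\<Sum>i<N. ((r ^ k) ^ l * b i * r ^ i) * (v ^ stride) ^ i) = 0"
    using z by (simp add: sum_distrib_left power_mult_distrib ac_simps)
  moreover have "\<forall>i<N. (r ^ k) ^ l * b i * r ^ i \<in> R"
    using b power_order_in_R_gr0 r by (auto intro!: R_closed)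
  ultimately have "\<forall>i<N. (r ^ k) ^ l * b i * r ^ i = 0"
    by (rule stride_power_independent[rotated])
  moreover have "(r ^ k) ^ (l + i) * b i = ((r ^ k) ^ l * b i * r ^ i) * r ^ (i * (k - 1))" for i
    unfolding power_add power_power_split[OF k(1)] by (simp add: ac_simps)
  ultimately show ?thesis
    by (metis mult_zero_left)
qed

lemma gr0_localization_poly_ring:
  "poly_ring_over (Loc (gr 0) (r ^ k)) {loc_cls (gr 0) (r ^ k) b n | b n. b \<in> R \<inter> gr 0}
     (loc_cls (gr 0) (r ^ k) (r * v ^ stride) 0)"
proof -
  interpret localization "gr 0" "r ^ k"
    by unfold_locales (use subring_set_gr0 power_order_in_R_gr0 in auto)
  show ?thesis
    using subring_set_Int[OF subring_set_R subring_set_gr0] power_order_in_R_gr0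
      rescaled_generator_in_gr0 gr0_localized_span gr0_localized_independent
    by (intro poly_ring_over_LocI) auto
qed

end

end

theorem lemma4p2:
  fixes gr :: "'g::ab_group_add \<Rightarrow> 'a::comm_ring_1 set"
    and R :: "'a set"
  assumes torsion: "\<forall>g::'g. \<exists>n>0. nsm n g = 0"
    and graded: "graded_ring gr"
    and subR: "graded_subring gr R"
    and polyS: "\<exists>v i. v \<in> gr i \<and> poly_ring_over (sring UNIV) R v"
    and Hsub: "0 \<in> {i. R \<inter> gr i \<noteq> {0}} \<and>
               (\<forall>i\<in>{i. R \<inter> gr i \<noteq> {0}}. \<forall>j\<in>{i. R \<inter> gr i \<noteq> {0}}.
                   i + j \<in> {i. R \<inter> gr i \<noteq> {0}} \<and> - i \<in> {i. R \<inter> gr i \<noteq> {0}})"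
  shows "(\<exists>w. poly_ring_over (sring (gr 0)) (R \<inter> gr 0) w) \<or>
         (\<exists>e. e \<in> {i. R \<inter> gr i \<noteq> {0}} - {0} \<and>
              (\<forall>r \<in> R \<inter> gr e - {0}. is_poly_ring1 (Loc (gr 0) (r ^ gorder e))))"
proof -
  obtain v d where "v \<in> gr d" "poly_ring_over (sring UNIV) R v" using polyS by blast
  then interpret graded_poly_extension gr R v d "{i. R \<inter> gr i \<noteq> {0}}"
    using graded subR torsion Hsub by unfold_locales auto
  show ?thesis
  proof (cases "nsm stride d = 0")
    case True
    then show ?thesis using gr0_poly_ring by blast
  next
    case False
    define e where "e = - nsm stride d"
    have order: "0 < gorder e" "nsm (gorder e) e = 0"
      using gorder torsion by blast+
    have "e \<in> {i. R \<inter> gr i \<noteq> {0}} - {0}"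
      using nsm_stride_in_H H_uminus False unfolding e_def by auto
    moreover have "is_poly_ring1 (Loc (gr 0) (r ^ gorder e))" if "r \<in> R \<inter> gr e" for r
      using gr0_localization_poly_ring[OF _ order[unfolded e_def]] that
      unfolding is_poly_ring1_def e_def by blast
    ultimately show ?thesis by blast
  qed
qed

end
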